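(* Let $X=\{a,b,c\}$ and consider the 25 commutative Frobenius objects in $\mathbf{Rel}$ on $X$ listed below (in all, $\tilde\mu$ is symmetric). Cases 1–20 have $\eta=\{a\}$, $\tilde\mu(a,x)=\tilde\mu(x,a)=\{x\}$, and $(\tilde\mu(b,b),\tilde\mu(b,c),\tilde\mu(c,c))$ and $\varepsilon$ given by: 1: $\varepsilon=\{a\}$, $(\{a\},\{c\},\{a,b\})$; 2: $\varepsilon=\{a\}$, $(\{a\},\{c\},\{a,b,c\})$; 3: $\varepsilon=\{a\}$, $(\{a,b\},\{c\},\{a,b\})$; 4: $\varepsilon=\{a\}$, $(\{a,b\},\{c\},\{a,b,c\})$; 5: $\varepsilon=\{a\}$, $(\{a,c\},\{b,c\},\{a,b\})$; 6: $\varepsilon=\{a\}$, $(\{a,c\},\{b,c\},\{a,b,c\})$; 7: $\varepsilon=\{a\}$, $(\{a,b,c\},\{b,c\},\{a,b,c\})$; 8: $\varepsilon=\{a\}$, $(\{b\},\{a,b,c\},\{b,c\})$; 9: $\varepsilon=\{a\}$, $(\{b\},\{a,b,c\},\{c\})$; 10: $\varepsilon=\{a\}$, $(\{c\},\{a\},\{b\})$; 11: $\varepsilon=\{a\}$, $(\{c\},\{a,b\},\{b,c\})$; 12: $\varepsilon=\{a\}$, $(\{b,c\},\{a,b,c\},\{b,c\})$; 13: $\varepsilon=\{b\}$, $(\emptyset,\emptyset,\{b\})$; 14: $\varepsilon=\{b\}$, $(\emptyset,\emptyset,\{b,c\})$; 15: $\varepsilon=\{b\}$, $(\{a\},\{c\},\{a,b\})$;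 16: $\varepsilon=\{b\}$, $(\{a\},\{c\},\{a,b,c\})$; 17: $\varepsilon=\{b\}$, $(\{c\},\{a\},\{b\})$; 18: $\varepsilon=\{b\}$, $(\{c\},\{a,c\},\{a,b,c\})$; 19: $\varepsilon=\{b\}$, $(\{a,c\},\{a,c\},\{a,b\})$; 20: $\varepsilon=\{b\}$, $(\{a,c\},\{a,c\},\{a,b,c\})$. Cases 21–24 have $\eta=\{a,b\}$, $\tilde\mu(a,a)=\{a\}$, $\tilde\mu(a,b)=\tilde\mu(a,c)=\emptyset$, $\tilde\mu(b,b)=\{b\}$, $\tilde\mu(b,c)=\{c\}$, and: 21: $\varepsilon=\{a,b\}$, $\tilde\mu(c,c)=\{b\}$; 22: $\varepsilon=\{a,b\}$, $\tilde\mu(c,c)=\{b,c\}$; 23: $\varepsilon=\{a,c\}$, $\tilde\mu(c,c)=\{b\}$; 24: $\varepsilon=\{a,c\}$, $\tilde\mu(c,c)=\emptyset$. Case 25: $\eta=\varepsilon=\{a,b,c\}$, $\tilde\mu(x,x)=\{x\}$, $\tilde\mu(x,y)=\emptyset$ for $x\neq y$. Then, for integers $g\ge0$, the partition functions are: for cases 1–12 and 21–25, $Z(\Sigma_g)=T$ for all $g$; for case 13, $Z(\Sigma_g)=T$ iff $g=1$; for cases 14, 15, 16, 18, 19, 20, $Z(\Sigma_g)=T$ iff $g\ge1$; for case 17, $Z(\Sigma_g)=T$ iff $g\equiv 1 \pmod 3$.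
   Context: $\mathbf{Rel}$ is the symmetric monoidal category of sets and relations ($S\circ R=\{(x,z):\exists y,(x,y)\in R,(y,z)\in S\}$, identities are diagonals, product is Cartesian product, unit $\{\bullet\}$). A relation $R\subseteq X\times Y$ is identified with $\tilde R:X\to\mathcal{P}(Y)$. A Frobenius object in $\mathbf{Rel}$ is a set $X$ with unit $\eta\subseteq X$ (relation $\{\bullet\}\to X$), counit $\varepsilon\subseteq X$ (relation $X\to\{\bullet\}$) and multiplication $\mu$ (relation $X\times X\to X$, with map $\tilde\mu$) satisfying unitality, associativity, and nondegeneracy: there is a (unique) relation $\beta:\{\bullet\}\to X\times X$ with $(\varepsilon\times\mathbf{1})\circ(\mu\times\mathbf{1})\circ(\mathbf{1}\times\beta)=(\mathbf{1}\times\varepsilon)\circ(\mathbf{1}\times\mu)\circ(\beta\times\mathbf{1})=\mathbf{1}$. The comultiplication is $\delta=(\mathbf{1}\times\mu)\circ(\beta\times\mathbf{1})$. Commutative means $\tilde\mu(x,y)=\tilde\mu(y,x)$. The partition function on the closed orientable surface of genus $g$ is $Z(\Sigma_g)=\varepsilon\circ(\mu\circ\delta)^g\circ\eta\in\{\emptyset,\{\bullet\}\}$, with $\emptyset$ read as $F$ and $\{\bullet\}$ as $T$. *)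

theory Defs
  imports Main
begin

text \<open>A morphism A -> B of Rel is a relation R :: ('a * 'b) set. Composition S o R
  (first R, then S) is the library relational composition R O S.
  The monoidal unit {bullet} is the type unit.\<close>

definition rcomp :: "('b \<times> 'c) set \<Rightarrow> ('a \<times> 'b) set \<Rightarrow> ('a \<times> 'c) set" (infixl "\<cdot>" 55) where
  "S \<cdot> R = R O S"

definition rtensor :: "('a \<times> 'b) set \<Rightarrow> ('c \<times> 'd) set \<Rightarrow> (('a \<times> 'c) \<times> ('b \<times> 'd)) set" (infixr "\<otimes>" 60) where
  "R \<otimes> S = {((x, x'), (y, y')) | x x' y y'. (x, y) \<in> R \<and> (x', y') \<in> S}"

definition lunit :: "((unit \<times> 'a) \<times> 'a) set" where "lunit = {(((), x), x) | x. True}"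
definition lunit_inv :: "('a \<times> (unit \<times> 'a)) set" where "lunit_inv = {(x, ((), x)) | x. True}"
definition runit :: "(('a \<times> unit) \<times> 'a) set" where "runit = {((x, ()), x) | x. True}"
definition runit_inv :: "('a \<times> ('a \<times> unit)) set" where "runit_inv = {(x, (x, ())) | x. True}"
definition assoc :: "((('a \<times> 'b) \<times> 'c) \<times> ('a \<times> ('b \<times> 'c))) set" where
  "assoc = {(((x, y), z), (x, (y, z))) | x y z. True}"
definition assoc_inv :: "(('a \<times> ('b \<times> 'c)) \<times> (('a \<times> 'b) \<times> 'c)) set" where
  "assoc_inv = {((x, (y, z)), ((x, y), z)) | x y z. True}"

definition unital :: "(unit \<times> 'x) set \<Rightarrow> (('x \<times> 'x) \<times> 'x) set \<Rightarrow> bool" where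
  "unital eta mu \<longleftrightarrow>
     mu \<cdot> (eta \<otimes> Id) \<cdot> lunit_inv = Id \<and> mu \<cdot> (Id \<otimes> eta) \<cdot> runit_inv = Id"

definition associative :: "(('x \<times> 'x) \<times> 'x) set \<Rightarrow> bool" where
  "associative mu \<longleftrightarrow> mu \<cdot> (mu \<otimes> Id) = mu \<cdot> (Id \<otimes> mu) \<cdot> assoc"

definition snake1 :: "('x \<times> unit) set \<Rightarrow> (('x \<times> 'x) \<times> 'x) set \<Rightarrow> (unit \<times> ('x \<times> 'x)) set \<Rightarrow> ('x \<times> 'x) set" where
  "snake1 eps mu beta = lunit \<cdot> (eps \<otimes> Id) \<cdot> (mu \<otimes> Id) \<cdot> assoc_inv \<cdot> (Id \<otimes> beta) \<cdot> runit_inv"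

definition snake2 :: "('x \<times> unit) set \<Rightarrow> (('x \<times> 'x) \<times> 'x) set \<Rightarrow> (unit \<times> ('x \<times> 'x)) set \<Rightarrow> ('x \<times> 'x) set" where
  "snake2 eps mu beta = runit \<cdot> (Id \<otimes> eps) \<cdot> (Id \<otimes> mu) \<cdot> assoc \<cdot> (beta \<otimes> Id) \<cdot> lunit_inv"

definition copairing :: "('x \<times> unit) set \<Rightarrow> (('x \<times> 'x) \<times> 'x) set \<Rightarrow> (unit \<times> ('x \<times> 'x)) set \<Rightarrow> bool" where
  "copairing eps mu beta \<longleftrightarrow> snake1 eps mu beta = Id \<and> snake2 eps mu beta = Id"

definition nondegenerate :: "('x \<times> unit) set \<Rightarrow> (('x \<times> 'x) \<times> 'x) set \<Rightarrow> bool" where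
  "nondegenerate eps mu \<longleftrightarrow> (\<exists>beta. copairing eps mu beta)"

definition frobenius :: "(unit \<times> 'x) set \<Rightarrow> ('x \<times> unit) set \<Rightarrow> (('x \<times> 'x) \<times> 'x) set \<Rightarrow> bool" where
  "frobenius eta eps mu \<longleftrightarrow> unital eta mu \<and> associative mu \<and> nondegenerate eps mu"

text \<open>The (unique) beta and the comultiplication delta = (1 x mu) o (beta x 1).\<close>
definition the_beta :: "('x \<times> unit) set \<Rightarrow> (('x \<times> 'x) \<times> 'x) set \<Rightarrow> (unit \<times> ('x \<times> 'x)) set" where
  "the_beta eps mu = (THE beta. copairing eps mu beta)"

definition comult :: "('x \<times> unit) set \<Rightarrow> (('x \<times> 'x) \<times> 'x) set \<Rightarrow> ('x \<times> ('x \<times> 'x)) set" where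
  "comult eps mu = (Id \<otimes> mu) \<cdot> assoc \<cdot> (the_beta eps mu \<otimes> Id) \<cdot> lunit_inv"

text \<open>Identification of relations with set-valued maps.\<close>
definition mu_tilde :: "(('x \<times> 'x) \<times> 'x) set \<Rightarrow> 'x \<Rightarrow> 'x \<Rightarrow> 'x set" where
  "mu_tilde mu x y = {z. ((x, y), z) \<in> mu}"

definition commutative :: "(('x \<times> 'x) \<times> 'x) set \<Rightarrow> bool" where
  "commutative mu \<longleftrightarrow> (\<forall>x y. mu_tilde mu x y = mu_tilde mu y x)"

text \<open>Partition function Z(Sigma_g) = eps o (mu o delta)^g o eta, a relation {bullet} -> {bullet};
  it is either empty (F) or {bullet} (T). We return True iff it is {bullet}.\<close>
definition Zrel :: "(unit \<times> 'x) set \<Rightarrow> ('x \<times> unit) set \<Rightarrow> (('x \<times> 'x) \<times> 'x) set \<Rightarrow> nat \<Rightarrow> (unit \<times> unit) set" where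
  "Zrel eta eps mu g = eps \<cdot> ((mu \<cdot> comult eps mu) ^^ g) \<cdot> eta"

definition Z :: "(unit \<times> 'x) set \<Rightarrow> ('x \<times> unit) set \<Rightarrow> (('x \<times> 'x) \<times> 'x) set \<Rightarrow> nat \<Rightarrow> bool" where
  "Z eta eps mu g \<longleftrightarrow> Zrel eta eps mu g = {((), ())}"

datatype X = a | b | c

definition unit_of :: "X set \<Rightarrow> (unit \<times> X) set" where "unit_of E = {((), x) | x. x \<in> E}"
definition counit_of :: "X set \<Rightarrow> (X \<times> unit) set" where "counit_of E = {(x, ()) | x. x \<in> E}"
definition mult_of :: "(X \<Rightarrow> X \<Rightarrow> X set) \<Rightarrow> ((X \<times> X) \<times> X) set" where
  "mult_of m = {((x, y), z) | x y z. z \<in> m x y}"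

definition tabA :: "X set \<Rightarrow> X set \<Rightarrow> X set \<Rightarrow> X \<Rightarrow> X \<Rightarrow> X set" where
  "tabA bb bc cc x y = (if x = a then {y} else if y = a then {x}
      else if x = b \<and> y = b then bb else if x = c \<and> y = c then cc else bc)"

definition tabB :: "X set \<Rightarrow> X \<Rightarrow> X \<Rightarrow> X set" where
  "tabB cc x y = (if x = a \<and> y = a then {a} else if x = a \<or> y = a then {}
      else if x = b \<and> y = b then {b} else if x = c \<and> y = c then cc else {c})"

definition tabC :: "X \<Rightarrow> X \<Rightarrow> X set" where
  "tabC x y = (if x = y then {x} else {})"

fun case_data :: "nat \<Rightarrow> X set \<times> X set \<times> (X \<Rightarrow> X \<Rightarrow> X set)" where
  "case_data k =
    (if k = 1 then ({a}, {a}, tabA {a} {c} {a,b})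
     else if k = 2 then ({a}, {a}, tabA {a} {c} {a,b,c})
     else if k = 3 then ({a}, {a}, tabA {a,b} {c} {a,b})
     else if k = 4 then ({a}, {a}, tabA {a,b} {c} {a,b,c})
     else if k = 5 then ({a}, {a}, tabA {a,c} {b,c} {a,b})
     else if k = 6 then ({a}, {a}, tabA {a,c} {b,c} {a,b,c})
     else if k = 7 then ({a}, {a}, tabA {a,b,c} {b,c} {a,b,c})
     else if k = 8 then ({a}, {a}, tabA {b} {a,b,c} {b,c})
     else if k = 9 then ({a}, {a}, tabA {b} {a,b,c} {c})
     else if k = 10 then ({a}, {a}, tabA {c} {a} {b})
     else if k = 11 then ({a}, {a}, tabA {c} {a,b} {b,c})
     else if k = 12 then ({a}, {a}, tabA {b,c} {a,b,c} {b,c})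
     else if k = 13 then ({a}, {b}, tabA {} {} {b})
     else if k = 14 then ({a}, {b}, tabA {} {} {b,c})
     else if k = 15 then ({a}, {b}, tabA {a} {c} {a,b})
     else if k = 16 then ({a}, {b}, tabA {a} {c} {a,b,c})
     else if k = 17 then ({a}, {b}, tabA {c} {a} {b})
     else if k = 18 then ({a}, {b}, tabA {c} {a,c} {a,b,c})
     else if k = 19 then ({a}, {b}, tabA {a,c} {a,c} {a,b})
     else if k = 20 then ({a}, {b}, tabA {a,c} {a,c} {a,b,c})
     else if k = 21 then ({a,b}, {a,b}, tabB {b})
     else if k = 22 then ({a,b}, {a,b}, tabB {b,c})
     else if k = 23 then ({a,b}, {a,c}, tabB {b})
     else if k = 24 then ({a,b}, {a,c}, tabB {})
     else ({a,b,c}, {a,b,c}, tabC))"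

definition eta_k :: "nat \<Rightarrow> (unit \<times> X) set" where "eta_k k = unit_of (fst (case_data k))"
definition eps_k :: "nat \<Rightarrow> (X \<times> unit) set" where "eps_k k = counit_of (fst (snd (case_data k)))"
definition mu_k :: "nat \<Rightarrow> ((X \<times> X) \<times> X) set" where "mu_k k = mult_of (snd (snd (case_data k)))"

end

theory Submission
  imports Defs
begin

text \<open>A nondegenerate pairing \<open>\<epsilon> \<circ> \<mu>\<close> in Rel is an invertible relation, hence the graph of a
  bijection, and its inverse is its converse. So the copairing \<open>\<beta>\<close>, and with it the handle
  operator \<open>H = \<mu> \<circ> \<delta>\<close>, can be read off the multiplication table, and
  \<open>Z(\<Sigma>\<^sub>g)\<close> holds iff some element of \<open>\<eta>\<close> reaches some element of \<open>\<epsilon>\<close> in exactly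
  \<open>g\<close> steps of \<open>H\<close>. On the three-element examples \<open>H\<close> is then computed explicitly: it has a
  loop at \<open>a \<in> \<eta> \<inter> \<epsilon>\<close> in cases 1--12 and 21--25, it is the single edge \<open>a \<rightarrow> b\<close> in case 13,
  the 3-cycle \<open>a \<rightarrow> b \<rightarrow> c \<rightarrow> a\<close> in case 17, and in the remaining cases it contains the edge
  \<open>a \<rightarrow> b\<close> and a path \<open>a \<rightarrow> y \<rightarrow> b\<close> through a loop at \<open>y\<close>.\<close>

lemma mem_rcomp [simp]: "(x, z) \<in> S \<cdot> R \<longleftrightarrow> (\<exists>y. (x, y) \<in> R \<and> (y, z) \<in> S)"
  unfolding rcomp_def by auto

lemma mem_rtensor [simp]: "((x, x'), (y, y')) \<in> R \<otimes> S \<longleftrightarrow> (x, y) \<in> R \<and> (x', y') \<in> S"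
  unfolding rtensor_def by auto

lemma mem_structural_isos [simp]:
  "((u, x), y) \<in> lunit \<longleftrightarrow> x = y"
  "(y, (u, x)) \<in> lunit_inv \<longleftrightarrow> x = y"
  "((x, u), y) \<in> runit \<longleftrightarrow> x = y"
  "(y, (x, u)) \<in> runit_inv \<longleftrightarrow> x = y"
  "(((x, y), z), (x', (y', z'))) \<in> assoc \<longleftrightarrow> x = x' \<and> y = y' \<and> z = z'"
  "((x, (y, z)), ((x', y'), z')) \<in> assoc_inv \<longleftrightarrow> x = x' \<and> y = y' \<and> z = z'"
  unfolding lunit_def lunit_inv_def runit_def runit_inv_def assoc_def assoc_inv_def by auto

definition pairing :: "('x \<times> unit) set \<Rightarrow> (('x \<times> 'x) \<times> 'x) set \<Rightarrow> ('x \<times> 'x) set" where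
  "pairing eps mu = {(x, y). \<exists>w. ((x, y), w) \<in> mu \<and> (w, ()) \<in> eps}"

definition beta_of :: "('x \<times> 'x) set \<Rightarrow> (unit \<times> ('x \<times> 'x)) set" where
  "beta_of P = {((), (y, z)) | y z. (z, y) \<in> P}"

definition handle :: "('x \<times> unit) set \<Rightarrow> (('x \<times> 'x) \<times> 'x) set \<Rightarrow> ('x \<times> 'x) set" where
  "handle eps mu = mu \<cdot> comult eps mu"

lemma mem_beta_of [simp]: "(u, (y, z)) \<in> beta_of P \<longleftrightarrow> (z, y) \<in> P"
  unfolding beta_of_def by auto

lemma copairing_iff:
  "copairing eps mu beta \<longleftrightarrow>
     (\<forall>x z. (\<exists>y. ((), (y, z)) \<in> beta \<and> (x, y) \<in> pairing eps mu) \<longleftrightarrow> x = z) \<and>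
     (\<forall>x z. (\<exists>y. ((), (z, y)) \<in> beta \<and> (y, x) \<in> pairing eps mu) \<longleftrightarrow> x = z)"
proof -
  have "(x, z) \<in> snake1 eps mu beta \<longleftrightarrow> (\<exists>y. ((), (y, z)) \<in> beta \<and> (x, y) \<in> pairing eps mu)"
    and "(x, z) \<in> snake2 eps mu beta \<longleftrightarrow> (\<exists>y. ((), (z, y)) \<in> beta \<and> (y, x) \<in> pairing eps mu)"
    for x z
    unfolding snake1_def snake2_def pairing_def by auto
  then show ?thesis
    unfolding copairing_def set_eq_iff by auto
qed

lemma copairing_eq_beta_of:
  assumes "copairing eps mu beta"
  shows "beta = beta_of (pairing eps mu)"
proof -
  let ?P = "pairing eps mu"
  have PB: "(\<exists>y. ((), (y, z)) \<in> beta \<and> (x, y) \<in> ?P) \<longleftrightarrow> x = z"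
   and BP: "(\<exists>y. ((), (z, y)) \<in> beta \<and> (y, x) \<in> ?P) \<longleftrightarrow> x = z" for x z
    using assms unfolding copairing_iff by blast+
  have "((), (y, z)) \<in> beta \<longleftrightarrow> (z, y) \<in> ?P" for y z
  proof -
    obtain y' where y': "(z, y') \<in> ?P" "((), (y', z)) \<in> beta"
      using PB[of z z] by blast
    have "((), (y, z)) \<in> beta \<Longrightarrow> y' = y"
      using y' BP[where x = y' and z = y] by blast
    moreover have "(z, y) \<in> ?P \<Longrightarrow> y = y'"
      using y' BP[where x = y and z = y'] by blast
    ultimately show ?thesis
      using y' by blast
  qed
  then show ?thesis
    unfolding beta_of_def by auto
qed

lemma nondegenerate_if_pairing_bijective:
  assumes "\<forall>x. \<exists>!y. (x, y) \<in> pairing eps mu" and "\<forall>y. \<exists>!x. (x, y) \<in> pairing eps mu"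
  shows "nondegenerate eps mu"
proof -
  have "copairing eps mu (beta_of (pairing eps mu))"
    using assms unfolding copairing_iff by (simp; metis)
  then show ?thesis
    unfolding nondegenerate_def by blast
qed

lemma the_beta_eq_beta_of:
  assumes "nondegenerate eps mu"
  shows "the_beta eps mu = beta_of (pairing eps mu)"
  using assms copairing_eq_beta_of unfolding nondegenerate_def the_beta_def by (metis the_equality)

lemma mem_handle:
  assumes "nondegenerate eps mu"
  shows "(x, t) \<in> handle eps mu \<longleftrightarrow>
    (\<exists>u v w. (v, u) \<in> pairing eps mu \<and> ((v, x), w) \<in> mu \<and> ((u, w), t) \<in> mu)"
  unfolding handle_def comult_def the_beta_eq_beta_of[OF assms] by auto

lemma Z_iff_relpow_handle:
  "Z eta eps mu g \<longleftrightarrow> (\<exists>x y. ((), x) \<in> eta \<and> (x, y) \<in> handle eps mu ^^ g \<and> (y, ()) \<in> eps)"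
proof -
  have "Z eta eps mu g \<longleftrightarrow> ((), ()) \<in> Zrel eta eps mu g"
    unfolding Z_def by auto
  then show ?thesis
    unfolding Zrel_def handle_def by auto
qed

lemma relpow_loop: "(x, x) \<in> R \<Longrightarrow> (x, x) \<in> R ^^ n"
  by (induction n) auto

lemma relpow_through_loop:
  assumes "(x, y) \<in> R" "(y, y) \<in> R" "(y, z) \<in> R"
  shows "(x, z) \<in> R ^^ Suc (Suc n)"
proof -
  have "(x, y) \<in> R ^^ Suc n"
    using assms(1) relpow_loop[OF assms(2)] by (rule relpow_Suc_I2)
  then show ?thesis
    using assms(3) by (rule relpow_Suc_I)
qed

lemma relpow_mod_period:
  assumes "R ^^ p = Id"
  shows "R ^^ n = R ^^ (n mod p)"
proof -
  have "R ^^ (r + p * q) = R ^^ r" for r q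
    by (induction q) (simp_all add: assms relpow_add flip: add.assoc)
  then show ?thesis
    by (metis mod_mult_div_eq)
qed

lemma Z_if_handle_loop:
  assumes "((), x) \<in> eta" "(x, ()) \<in> eps" "(x, x) \<in> handle eps mu"
  shows "Z eta eps mu g"
  using assms(1,2) relpow_loop[OF assms(3)] unfolding Z_iff_relpow_handle by blast

lemma Z_iff_positive_genus:
  assumes "\<nexists>x. ((), x) \<in> eta \<and> (x, ()) \<in> eps"
    and "((), x) \<in> eta" "(z, ()) \<in> eps" "(x, z) \<in> handle eps mu"
    and "\<exists>y. (x, y) \<in> handle eps mu \<and> (y, y) \<in> handle eps mu \<and> (y, z) \<in> handle eps mu"
  shows "Z eta eps mu g \<longleftrightarrow> 1 \<le> g"
proof (cases g)
  case 0
  then show ?thesis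
    using assms(1) by (simp add: Z_iff_relpow_handle)
next
  case (Suc n)
  have "(x, z) \<in> handle eps mu ^^ g"
    using Suc assms(4,5) relpow_through_loop by (cases n) auto
  then show ?thesis
    using Suc assms(2,3) Z_iff_relpow_handle by fastforce
qed

lemma mem_of_table [simp]:
  "(u, x) \<in> unit_of E \<longleftrightarrow> x \<in> E"
  "(x, u) \<in> counit_of E \<longleftrightarrow> x \<in> E"
  "((x, y), z) \<in> mult_of m \<longleftrightarrow> z \<in> m x y"
  unfolding unit_of_def counit_of_def mult_of_def by auto

lemma mem_pairing_of_table [simp]:
  "(x, y) \<in> pairing (counit_of Ep) (mult_of m) \<longleftrightarrow> (\<exists>w\<in>m x y. w \<in> Ep)"
  unfolding pairing_def by auto

lemma unital_mult_of_iff: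
  "unital (unit_of E) (mult_of m) \<longleftrightarrow>
     (\<forall>x z. (\<exists>e\<in>E. z \<in> m e x) \<longleftrightarrow> x = z) \<and> (\<forall>x z. (\<exists>e\<in>E. z \<in> m x e) \<longleftrightarrow> x = z)"
  unfolding unital_def set_eq_iff by (simp add: Bex_def)

lemma associative_mult_of_iff:
  "associative (mult_of m) \<longleftrightarrow>
     (\<forall>x y z w. (\<exists>u\<in>m x y. w \<in> m u z) \<longleftrightarrow> (\<exists>u\<in>m y z. w \<in> m x u))"
  unfolding associative_def set_eq_iff by simp blast

lemma commutative_mult_of_iff: "commutative (mult_of m) \<longleftrightarrow> (\<forall>x y. m x y = m y x)"
  unfolding commutative_def mu_tilde_def by auto

lemma all_X: "(\<forall>x. P x) \<longleftrightarrow> P a \<and> P b \<and> P c"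
  by (metis X.exhaust)

lemma ex_X: "(\<exists>x. P x) \<longleftrightarrow> P a \<or> P b \<or> P c"
  by (metis X.exhaust)

(* The nondegeneracy premise of the conditional rewrite rule mem_handle is discharged by
   the simplifier through nondegenerate_if_pairing_bijective, i.e. by evaluating the table. *)
lemmas example_simps =
  eta_k_def eps_k_def mu_k_def tabA_def tabB_def tabC_def all_X ex_X Ex1_def
  mem_handle nondegenerate_if_pairing_bijective

lemma examples_frobenius_commutative:
  "\<forall>k\<in>{1..25}. frobenius (eta_k k) (eps_k k) (mu_k k) \<and> commutative (mu_k k)"
proof -
  have range: "{1..25::nat} = {1,2,3,4,5,6,7,8,9,10,11,12,13,14,15,16,17,18,19,20,21,22,23,24,25}"
    by (simp add: atLeastAtMost_insertL[symmetric] numeral_eq_Suc)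
  show ?thesis
    unfolding range ball_simps simp_thms frobenius_def
    by (intro conjI; simp add: unital_mult_of_iff associative_mult_of_iff
        commutative_mult_of_iff example_simps)
qed

lemma Z_examples_always:
  "\<forall>k \<in> {1..12} \<union> {21..25}. \<forall>g. Z (eta_k k) (eps_k k) (mu_k k) g"
proof -
  have range: "{1..12::nat} \<union> {21..25} = {1,2,3,4,5,6,7,8,9,10,11,12,21,22,23,24,25}"
    by (simp add: atLeastAtMost_insertL[symmetric] numeral_eq_Suc insert_commute)
  show ?thesis
    unfolding range ball_simps simp_thms
    by (intro conjI allI; rule Z_if_handle_loop[where x = a]; simp add: example_simps)
qed

lemma Z_examples_positive_genus:
  "\<forall>k \<in> {14, 15, 16, 18, 19, 20}. \<forall>g. Z (eta_k k) (eps_k k) (mu_k k) g \<longleftrightarrow> g \<ge> 1"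
  unfolding ball_simps simp_thms
  by (intro conjI allI; rule Z_iff_positive_genus[where x = a and z = b]; simp add: example_simps)

lemma handle_example_13: "handle (eps_k 13) (mu_k 13) = {(a, b)}"
  by (simp add: set_eq_iff example_simps)

lemma Z_example_13: "Z (eta_k 13) (eps_k 13) (mu_k 13) g \<longleftrightarrow> g = 1"
proof -
  have vanishes: "{(a, b)} ^^ Suc (Suc n) = {}" for n
    by (induction n) auto
  consider "g = 0" | "g = 1" | n where "g = Suc (Suc n)"
    by (metis One_nat_def not0_implies_Suc)
  then show ?thesis
    unfolding Z_iff_relpow_handle handle_example_13
    by cases (auto simp: eta_k_def eps_k_def vanishes)
qed

lemma handle_example_17: "handle (eps_k 17) (mu_k 17) = {(a, b), (b, c), (c, a)}"
  by (simp add: set_eq_iff example_simps)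

lemma Z_example_17: "Z (eta_k 17) (eps_k 17) (mu_k 17) g \<longleftrightarrow> g mod 3 = 1"
proof -
  let ?H = "{(a, b), (b, c), (c, a)}"
  have "?H ^^ 3 = {(a, a), (b, b), (c, c)}"
    by (auto simp: numeral_3_eq_3)
  also have "\<dots> = Id"
    using X.exhaust by auto
  finally have period: "?H ^^ g = ?H ^^ (g mod 3)"
    by (rule relpow_mod_period)
  have "(a, b) \<in> ?H ^^ r \<longleftrightarrow> r = 1" if "r < 3" for r
    using that by (auto simp: less_Suc_eq numeral_3_eq_3)
  then have "(a, b) \<in> ?H ^^ g \<longleftrightarrow> g mod 3 = 1"
    unfolding period by simp
  then show ?thesis
    unfolding Z_iff_relpow_handle handle_example_17 by (simp add: eta_k_def eps_k_def)
qed

theorem mainTheorem6: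
  shows "(\<forall>k \<in> {1..25::nat}. frobenius (eta_k k) (eps_k k) (mu_k k) \<and> commutative (mu_k k))
    \<and> (\<forall>k \<in> {1..12} \<union> {21..25}. \<forall>g. Z (eta_k k) (eps_k k) (mu_k k) g)
    \<and> (\<forall>g. Z (eta_k 13) (eps_k 13) (mu_k 13) g \<longleftrightarrow> g = 1)
    \<and> (\<forall>k \<in> {14, 15, 16, 18, 19, 20}. \<forall>g. Z (eta_k k) (eps_k k) (mu_k k) g \<longleftrightarrow> g \<ge> 1)
    \<and> (\<forall>g. Z (eta_k 17) (eps_k 17) (mu_k 17) g \<longleftrightarrow> g mod 3 = 1)"
  using examples_frobenius_commutative Z_examples_always Z_example_13 Z_examples_positive_genus Z_example_17 by blast

end
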